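(* Let $H$ be a Hilbert space and $T$ a densely defined closed operator on $H$ with closed range. Then $T$ is selfadjoint if and only if $w(T)$ is selfadjoint.
   Context: For a densely defined closed operator $A$ with closed range, $C(A)=D(A)\cap N(A)^{\perp}$, and the Moore–Penrose inverse $A^{\dagger}$ is defined on $R(A)\oplus^{\perp}R(A)^{\perp}$ by $A^{\dagger}y=(A|_{C(A)})^{-1}y$ for $y\in R(A)$ and $A^{\dagger}y=0$ for $y\in R(A)^{\perp}$. The generalized Cauchy dual is $w(A)=A(A^{*}A)^{\dagger}$ (products on natural domains). *)

theory Defs
  imports "HOL-Analysis.Analysis"
begin

class complex_vector = real_vector +
  fixes scaleC :: "complex \<Rightarrow> 'a \<Rightarrow> 'a" (infixr \<open>*\<^sub>C\<close> 75)
  assumes scaleC_add_right: "a *\<^sub>C (x + y) = a *\<^sub>C x + a *\<^sub>C y"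
    and scaleC_add_left: "(a + b) *\<^sub>C x = a *\<^sub>C x + b *\<^sub>C x"
    and scaleC_scaleC: "a *\<^sub>C (b *\<^sub>C x) = (a * b) *\<^sub>C x"
    and scaleC_one: "1 *\<^sub>C x = x"
    and scaleR_scaleC: "r *\<^sub>R x = complex_of_real r *\<^sub>C x"

class complex_inner = complex_vector + real_normed_vector +
  fixes cinner :: "'a \<Rightarrow> 'a \<Rightarrow> complex"
  assumes cinner_commute: "cinner x y = cnj (cinner y x)"
    and cinner_add_left: "cinner (x + y) z = cinner x z + cinner y z"
    and cinner_scaleC_left: "cinner (c *\<^sub>C x) y = cnj c * cinner x y"
    and cinner_ge_zero: "0 \<le> Re (cinner x x)"
    and cinner_eq_zero_iff: "cinner x x = 0 \<longleftrightarrow> x = 0"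
    and norm_eq_sqrt_cinner: "norm x = sqrt (Re (cinner x x))"

class chilbert_space = complex_inner + complete_space

type_synonym 'a linop = "'a set \<times> ('a \<Rightarrow> 'a)"

definition op_dom :: "'a linop \<Rightarrow> 'a set" where "op_dom T = fst T"
definition op_app :: "'a linop \<Rightarrow> 'a \<Rightarrow> 'a" where "op_app T = snd T"

definition csubspace :: "'a::complex_vector set \<Rightarrow> bool" where
  "csubspace S \<longleftrightarrow> 0 \<in> S \<and> (\<forall>x\<in>S. \<forall>y\<in>S. x + y \<in> S) \<and> (\<forall>c. \<forall>x\<in>S. c *\<^sub>C x \<in> S)"

definition lin_op :: "'a::complex_vector linop \<Rightarrow> bool" where
  "lin_op T \<longleftrightarrow> csubspace (op_dom T)
     \<and> (\<forall>x\<in>op_dom T. \<forall>y\<in>op_dom T. op_app T (x + y) = op_app T x + op_app T y)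
     \<and> (\<forall>c. \<forall>x\<in>op_dom T. op_app T (c *\<^sub>C x) = c *\<^sub>C op_app T x)"

definition densely_defined :: "'a::complex_inner linop \<Rightarrow> bool" where
  "densely_defined T \<longleftrightarrow> closure (op_dom T) = UNIV"

definition graph :: "'a linop \<Rightarrow> ('a \<times> 'a) set" where
  "graph T = {(x, op_app T x) | x. x \<in> op_dom T}"

definition closed_op :: "'a::complex_inner linop \<Rightarrow> bool" where
  "closed_op T \<longleftrightarrow> closed (graph T)"

definition ran :: "'a linop \<Rightarrow> 'a set" where
  "ran T = op_app T ` op_dom T"

definition ker :: "'a::zero linop \<Rightarrow> 'a set" where
  "ker T = {x \<in> op_dom T. op_app T x = 0}"

definition orth :: "'a::complex_inner set \<Rightarrow> 'a set" where
  "orth S = {y. \<forall>x\<in>S. cinner x y = 0}"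

text \<open>Hilbert space adjoint (for densely defined T the defining vector z is unique).\<close>
definition adjoint :: "'a::complex_inner linop \<Rightarrow> 'a linop" where
  "adjoint T = ({y. \<exists>z. \<forall>x\<in>op_dom T. cinner (op_app T x) y = cinner x z},
                \<lambda>y. THE z. \<forall>x\<in>op_dom T. cinner (op_app T x) y = cinner x z)"

definition op_comp :: "'a linop \<Rightarrow> 'a linop \<Rightarrow> 'a linop" where
  "op_comp A B = ({x \<in> op_dom B. op_app B x \<in> op_dom A}, \<lambda>x. op_app A (op_app B x))"

definition carrier_op :: "'a::complex_inner linop \<Rightarrow> 'a set" where
  "carrier_op A = op_dom A \<inter> orth (ker A)"

text \<open>Moore--Penrose inverse: defined on R(A) \<oplus> R(A)^\<bottom>, with
  A\<dagger>(Ax + z) = x for x \<in> C(A), z \<in> R(A)^\<bottom>.\<close>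
definition mp_inv :: "'a::complex_inner linop \<Rightarrow> 'a linop" where
  "mp_inv A = ({y + z | y z. y \<in> ran A \<and> z \<in> orth (ran A)},
               \<lambda>v. THE x. x \<in> carrier_op A \<and> (\<exists>z\<in>orth (ran A). v = op_app A x + z))"

text \<open>Generalized Cauchy dual w(A) = A (A^* A)\<dagger>.\<close>
definition cauchy_dual :: "'a::complex_inner linop \<Rightarrow> 'a linop" where
  "cauchy_dual A = op_comp A (mp_inv (op_comp (adjoint A) A))"

definition selfadjoint :: "'a::complex_inner linop \<Rightarrow> bool" where
  "selfadjoint T \<longleftrightarrow> densely_defined T \<and> op_dom (adjoint T) = op_dom T
      \<and> (\<forall>x\<in>op_dom T. op_app (adjoint T) x = op_app T x)"

end

(* Write T' for the adjoint and S = T'T. Since R(T) is closed, R(S) = R(T'), and since T is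
   closed, R(T')^\<bottom> = N(T); so w(T) is defined on R(S) + N(T) and sends Sx + n to Tx.
   If T = T', then R(S) = R(T) and N(T) = R(T)^\<bottom>, so w(T) is everywhere defined and symmetric,
   hence selfadjoint. Conversely, if w(T) is selfadjoint, pairing w(T) against Tx + z with z in
   R(T)^\<bottom> shows that w(T) is everywhere defined and sends Tx + z to the component of x in
   N(T)^\<bottom>. This yields N(T) = R(T)^\<bottom> and the symmetry of T; finally
   R(T') \<subseteq> N(T)^\<bottom> = R(T) forces D(T') \<subseteq> D(T). *)

theory Submission
  imports Defs
begin

lemma cinner_add_right: "cinner x (y + z) = cinner x y + cinner x z"
  by (metis cinner_add_left cinner_commute complex_cnj_add)

lemma cinner_scaleC_right: "cinner x (c *\<^sub>C y) = c * cinner x y"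
  by (metis cinner_commute cinner_scaleC_left complex_cnj_cnj complex_cnj_mult)

lemma scaleC_minus1_left: "(-1::complex) *\<^sub>C x = - (x::'a::complex_vector)"
  by (metis of_real_1 of_real_minus scaleR_minus1_left scaleR_scaleC)

lemma scaleC_zero_right [simp]: "c *\<^sub>C (0::'a::complex_vector) = 0"
  by (metis add_cancel_right_right add_0 scaleC_add_right)

lemma cinner_zero_left [simp]: "cinner 0 y = 0"
  by (metis add_cancel_right_right add_0 cinner_add_left)

lemma cinner_zero_right [simp]: "cinner y 0 = 0"
  by (metis cinner_commute cinner_zero_left complex_cnj_zero)

lemma cinner_minus_left: "cinner (- x) y = - cinner x y"
  by (metis cinner_scaleC_left scaleC_minus1_left complex_cnj_minus complex_cnj_one mult_minus1)

lemma cinner_minus_right: "cinner y (- x) = - cinner y x"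
  by (metis cinner_scaleC_right scaleC_minus1_left mult_minus1)

lemma cinner_diff_left: "cinner (x - y) z = cinner x z - cinner y z"
  using cinner_add_left[of x "- y" z] by (simp add: cinner_minus_left)

lemma cinner_diff_right: "cinner z (x - y) = cinner z x - cinner z y"
  using cinner_add_right[of z x "- y"] by (simp add: cinner_minus_right)

lemma cinner_scaleR_left: "cinner (r *\<^sub>R x) y = complex_of_real r * cinner x y"
  by (simp add: scaleR_scaleC cinner_scaleC_left)

lemma cinner_scaleR_right: "cinner y (r *\<^sub>R x) = complex_of_real r * cinner y x"
  by (simp add: scaleR_scaleC cinner_scaleC_right)

lemma cinner_self_eq_norm_sq: "cinner x x = complex_of_real ((norm x)\<^sup>2)"
proof -
  have "Im (cinner x x) = 0"
    using cinner_commute[of x x] by (metis Reals_cnj_iff complex_is_Real_iff)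
  moreover have "Re (cinner x x) = (norm x)\<^sup>2"
    using norm_eq_sqrt_cinner[of x] cinner_ge_zero[of x] by simp
  ultimately show ?thesis by (simp add: complex_eq_iff)
qed

lemma cinner_commute_eq_zero: "cinner x y = 0 \<longleftrightarrow> cinner y x = 0"
  using cinner_commute[of x y] by auto

lemma power2_norm_eq_cinner: "(norm x)\<^sup>2 = Re (cinner x x)"
  by (simp add: cinner_self_eq_norm_sq)

lemma parallelogram_law:
  fixes x y :: "'a::complex_inner"
  shows "(norm (x + y))\<^sup>2 + (norm (x - y))\<^sup>2 = 2 * (norm x)\<^sup>2 + 2 * (norm y)\<^sup>2"
  unfolding power2_norm_eq_cinner
  by (simp add: cinner_add_left cinner_add_right cinner_diff_left cinner_diff_right)

lemma norm_diff_scaleR_sq: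
  "(norm (a - t *\<^sub>R w))\<^sup>2 = (norm a)\<^sup>2 - 2 * t * Re (cinner w a) + t\<^sup>2 * (norm w)\<^sup>2"
proof -
  have "Re (cinner a w) = Re (cinner w a)"
    using cinner_commute[of a w] by simp
  then show ?thesis
    unfolding power2_norm_eq_cinner
    by (simp add: cinner_diff_left cinner_diff_right cinner_scaleR_left cinner_scaleR_right
        power2_eq_square algebra_simps)
qed

lemma linear_coeff_zero_if_quadratic_nonneg:
  fixes \<alpha> \<beta> :: real
  assumes "\<And>t. 0 \<le> t\<^sup>2 * \<beta> - 2 * t * \<alpha>"
  shows "\<alpha> = 0"
proof -
  define t where "t = \<alpha> / (\<bar>\<beta>\<bar> + 1)"
  have "\<alpha> = t * (\<bar>\<beta>\<bar> + 1)"
    unfolding t_def by simp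
  then have "\<alpha>\<^sup>2 * (\<beta> - 2 * (\<bar>\<beta>\<bar> + 1)) = (\<bar>\<beta>\<bar> + 1)\<^sup>2 * (t\<^sup>2 * \<beta> - 2 * t * \<alpha>)"
    by (simp add: power2_eq_square algebra_simps)
  also have "\<dots> \<ge> 0"
    using assms by simp
  finally have "0 \<le> \<alpha>\<^sup>2 * (\<beta> - 2 * (\<bar>\<beta>\<bar> + 1))" .
  moreover have "\<beta> - 2 * (\<bar>\<beta>\<bar> + 1) < 0"
    by (simp add: abs_if)
  ultimately have "\<alpha>\<^sup>2 \<le> 0"
    by (simp add: zero_le_mult_iff)
  then show ?thesis
    by simp
qed

text \<open>Apollonius' identity at p, with the midpoint of a and b in K.\<close>
lemma norm_diff_sq_le_infdist:
  fixes K :: "'a::complex_inner set"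
  assumes "convex K" and "a \<in> K" and "b \<in> K"
  shows "(norm (a - b))\<^sup>2 \<le> 2 * (norm (p - a))\<^sup>2 + 2 * (norm (p - b))\<^sup>2 - 4 * (infdist p K)\<^sup>2"
proof -
  let ?m = "(1/2) *\<^sub>R a + (1/2) *\<^sub>R b"
  have "?m \<in> K"
    using convexD[OF assms] by simp
  then have "(infdist p K)\<^sup>2 \<le> (norm (p - ?m))\<^sup>2"
    using infdist_le[of ?m K p] infdist_nonneg[of p K] by (simp add: dist_norm power_mono)
  moreover have "(p - a) + (p - b) = 2 *\<^sub>R (p - ?m)"
    by (simp add: algebra_simps scaleR_2)
  moreover have "(p - a) - (p - b) = - (a - b)"
    by simp
  ultimately show ?thesis
    using parallelogram_law[of "p - a" "p - b"] by (simp add: power_mult_distrib norm_minus_commute)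
qed

lemma nearest_point_exists:
  fixes K :: "'a::chilbert_space set"
  assumes "closed K" and "convex K" and "K \<noteq> {}"
  shows "\<exists>k\<in>K. \<forall>k'\<in>K. norm (p - k) \<le> norm (p - k')"
proof -
  define d where "d = infdist p K"
  have d_le: "d \<le> norm (p - k)" if "k \<in> K" for k
    using infdist_le[OF that, of p] by (simp add: d_def dist_norm)
  have "d \<ge> 0"
    unfolding d_def by (rule infdist_nonneg)
  have eps: "(\<lambda>n. 1 / (real n + 1)) \<longlonglongrightarrow> 0"
    using LIMSEQ_inverse_real_of_nat by (simp add: inverse_eq_divide add.commute)
  have "\<exists>k\<in>K. (norm (p - k))\<^sup>2 < d\<^sup>2 + 1 / (real n + 1)" for n
  proof -
    have "infdist p K < sqrt (d\<^sup>2 + 1 / (real n + 1))"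
      using \<open>d \<ge> 0\<close> real_less_rsqrt by (simp add: d_def)
    moreover have "bdd_below ((\<lambda>k. dist p k) ` K)"
      by (rule bdd_belowI2[where m = 0]) simp
    ultimately obtain k where "k \<in> K" "norm (p - k) < sqrt (d\<^sup>2 + 1 / (real n + 1))"
      by (auto simp: infdist_notempty[OF assms(3)] cINF_less_iff[OF assms(3)] dist_norm)
    then have "(norm (p - k))\<^sup>2 < (sqrt (d\<^sup>2 + 1 / (real n + 1)))\<^sup>2"
      by (intro power_strict_mono) auto
    with \<open>k \<in> K\<close> show ?thesis
      by auto
  qed
  then obtain ks where ks_in: "\<And>n. ks n \<in> K"
    and ks_near: "\<And>n. (norm (p - ks n))\<^sup>2 < d\<^sup>2 + 1 / (real n + 1)"
    by metis
  have "Cauchy ks"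
  proof (rule metric_CauchyI)
    fix e :: real
    assume "0 < e"
    then obtain N where N: "\<And>n. n \<ge> N \<Longrightarrow> 1 / (real n + 1) < e\<^sup>2 / 4"
      using order_tendstoD(2)[OF eps, of "e\<^sup>2 / 4"] by (auto simp: eventually_sequentially)
    have "dist (ks m) (ks n) < e" if "m \<ge> N" "n \<ge> N" for m n
    proof -
      have "(norm (ks m - ks n))\<^sup>2 < e\<^sup>2"
        using norm_diff_sq_le_infdist[OF assms(2) ks_in ks_in, of m n p] ks_near[of m] ks_near[of n]
          N[OF that(1)] N[OF that(2)] unfolding d_def by linarith
      then show ?thesis
        using \<open>0 < e\<close> by (simp add: dist_norm power_less_imp_less_base less_imp_le)
    qed
    then show "\<exists>M. \<forall>m\<ge>M. \<forall>n\<ge>M. dist (ks m) (ks n) < e"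
      by blast
  qed
  then obtain k where lim: "ks \<longlonglongrightarrow> k"
    using convergent_eq_Cauchy by blast
  have "k \<in> K"
    using assms(1) ks_in lim closed_sequentially by blast
  have "(\<lambda>n. d\<^sup>2 + 1 / (real n + 1)) \<longlonglongrightarrow> d\<^sup>2 + 0"
    using eps by (intro tendsto_intros)
  moreover have "(\<lambda>n. (norm (p - ks n))\<^sup>2) \<longlonglongrightarrow> (norm (p - k))\<^sup>2"
    by (intro tendsto_intros lim)
  ultimately have "(norm (p - k))\<^sup>2 \<le> d\<^sup>2"
    using ks_near by (simp add: LIMSEQ_le less_imp_le)
  then have "norm (p - k) \<le> d"
    using \<open>d \<ge> 0\<close> power2_le_imp_le by blast
  then show ?thesis
    using \<open>k \<in> K\<close> d_le by force
qed

lemma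
  assumes "csubspace K"
  shows csubspace_0: "0 \<in> K"
    and csubspace_add: "x \<in> K \<Longrightarrow> y \<in> K \<Longrightarrow> x + y \<in> K"
    and csubspace_scaleC: "x \<in> K \<Longrightarrow> c *\<^sub>C x \<in> K"
  using assms unfolding csubspace_def by auto

lemma csubspace_diff: "csubspace K \<Longrightarrow> x \<in> K \<Longrightarrow> y \<in> K \<Longrightarrow> x - y \<in> K"
  using csubspace_add[of K x "(-1) *\<^sub>C y"] csubspace_scaleC[of K y "-1"]
  by (simp add: scaleC_minus1_left)

lemma csubspace_scaleR: "csubspace K \<Longrightarrow> x \<in> K \<Longrightarrow> r *\<^sub>R x \<in> K"
  by (simp add: scaleR_scaleC csubspace_scaleC)

lemma csubspace_convex: "csubspace K \<Longrightarrow> convex K"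
  by (simp add: convexI csubspace_add csubspace_scaleR)

lemma orth_eq_zero_if_mem: "x \<in> K \<Longrightarrow> x \<in> orth K \<Longrightarrow> x = 0"
  unfolding orth_def using cinner_eq_zero_iff by blast

lemma orth_zero [simp]: "0 \<in> orth K"
  unfolding orth_def by simp

lemma orth_diff: "x \<in> orth K \<Longrightarrow> y \<in> orth K \<Longrightarrow> x - y \<in> orth K"
  unfolding orth_def by (simp add: cinner_diff_right)

text \<open>The nearest point k of K to x is the orthogonal projection: moving from k along any w in K
  cannot decrease the distance to x, so the linear term of this quadratic in t vanishes.\<close>
lemma orth_projection_exists:
  fixes K :: "'a::chilbert_space set"
  assumes "closed K" and "csubspace K"
  shows "\<exists>k\<in>K. x - k \<in> orth K"
proof -
  obtain k where "k \<in> K" and nearest: "\<And>k'. k' \<in> K \<Longrightarrow> norm (x - k) \<le> norm (x - k')"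
    using nearest_point_exists[OF assms(1) csubspace_convex[OF assms(2)]] csubspace_0[OF assms(2)]
    by blast
  have Re_zero: "Re (cinner w (x - k)) = 0" if "w \<in> K" for w
  proof (rule linear_coeff_zero_if_quadratic_nonneg)
    fix t :: real
    have "k + t *\<^sub>R w \<in> K"
      using assms(2) \<open>k \<in> K\<close> that by (simp add: csubspace_add csubspace_scaleR)
    then have "norm (x - k) \<le> norm ((x - k) - t *\<^sub>R w)"
      using nearest by (simp add: algebra_simps)
    then have "(norm (x - k))\<^sup>2 \<le> (norm ((x - k) - t *\<^sub>R w))\<^sup>2"
      by (simp add: power_mono)
    then show "0 \<le> t\<^sup>2 * (norm w)\<^sup>2 - 2 * t * Re (cinner w (x - k))"
      unfolding norm_diff_scaleR_sq by linarith
  qed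
  have "cinner w (x - k) = 0" if "w \<in> K" for w
  proof -
    have "Re (cinner (\<i> *\<^sub>C w) (x - k)) = 0"
      using Re_zero assms(2) that by (simp add: csubspace_scaleC)
    then have "Im (cinner w (x - k)) = 0"
      by (simp add: cinner_scaleC_left)
    with Re_zero[OF that] show ?thesis
      by (simp add: complex_eq_iff)
  qed
  with \<open>k \<in> K\<close> show ?thesis
    unfolding orth_def by blast
qed

lemma orth_orth:
  fixes K :: "'a::chilbert_space set"
  assumes "closed K" and "csubspace K"
  shows "orth (orth K) = K"
proof
  show "K \<subseteq> orth (orth K)"
    unfolding orth_def using cinner_commute_eq_zero by blast
  show "orth (orth K) \<subseteq> K"
  proof
    fix x
    assume x: "x \<in> orth (orth K)"
    obtain k where "k \<in> K" and xk: "x - k \<in> orth K"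
      using orth_projection_exists[OF assms] by blast
    have "k \<in> orth (orth K)"
      using \<open>k \<in> K\<close> unfolding orth_def using cinner_commute_eq_zero by blast
    then have "x - k \<in> orth (orth K)"
      using x orth_diff by blast
    then have "x - k = 0"
      using xk orth_eq_zero_if_mem by blast
    with \<open>k \<in> K\<close> show "x \<in> K"
      by simp
  qed
qed

text \<open>By polarisation Re (cinner x z) is continuous in x, so orthogonality to S passes to its
  closure.\<close>
lemma orth_dense:
  fixes S :: "'a::complex_inner set"
  assumes "closure S = UNIV"
  shows "orth S = {0}"
proof -
  have "z = 0" if "z \<in> orth S" for z
  proof -
    let ?C = "{x. (norm (x + z))\<^sup>2 - (norm (x - z))\<^sup>2 = 0}"
    have polar: "(norm (x + z))\<^sup>2 - (norm (x - z))\<^sup>2 = 4 * Re (cinner x z)" for x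
    proof -
      have "Re (cinner z x) = Re (cinner x z)"
        using cinner_commute[of z x] by simp
      then show ?thesis
        unfolding power2_norm_eq_cinner
        by (simp add: cinner_add_left cinner_add_right cinner_diff_left cinner_diff_right)
    qed
    have "closed ?C"
      by (intro closed_Collect_eq continuous_intros)
    moreover have "S \<subseteq> ?C"
      using that polar unfolding orth_def by auto
    ultimately have "z \<in> ?C"
      using assms closure_minimal by blast
    then have "z + z = 0"
      by simp
    then show "z = 0"
      by (metis scaleR_2 scaleR_eq_0_iff zero_neq_numeral)
  qed
  then show ?thesis
    unfolding orth_def by auto
qed

instantiation prod :: (complex_vector, complex_vector) complex_vector
begin

definition scaleC_prod_def: "c *\<^sub>C x = (c *\<^sub>C fst x, c *\<^sub>C snd x)"

instance
  by standard (simp_all add: scaleC_prod_def scaleC_add_right scaleC_add_left scaleC_scaleC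
      scaleC_one scaleR_scaleC prod_eq_iff)

end

instantiation prod :: (complex_inner, complex_inner) complex_inner
begin

definition cinner_prod_def: "cinner x y = cinner (fst x) (fst y) + cinner (snd x) (snd y)"

instance
proof
  fix x y z :: "'a \<times> 'b" and c :: complex
  show "cinner x y = cnj (cinner y x)"
    unfolding cinner_prod_def by (metis cinner_commute complex_cnj_add)
  show "cinner (x + y) z = cinner x z + cinner y z"
    unfolding cinner_prod_def by (simp add: cinner_add_left)
  show "cinner (c *\<^sub>C x) y = cnj c * cinner x y"
    unfolding cinner_prod_def scaleC_prod_def by (simp add: cinner_scaleC_left algebra_simps)
  have cinner_self: "cinner x x = complex_of_real ((norm (fst x))\<^sup>2 + (norm (snd x))\<^sup>2)"
    unfolding cinner_prod_def by (simp add: cinner_self_eq_norm_sq)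
  show "0 \<le> Re (cinner x x)"
    unfolding cinner_self by simp
  show "cinner x x = 0 \<longleftrightarrow> x = 0"
    unfolding cinner_self of_real_eq_0_iff by (simp add: add_nonneg_eq_0_iff prod_eq_iff)
  show "norm x = sqrt (Re (cinner x x))"
    unfolding cinner_self by (simp add: norm_prod_def)
qed

end

instance prod :: (chilbert_space, chilbert_space) chilbert_space ..

lemma
  assumes "lin_op B"
  shows lin_op_dom_csubspace: "csubspace (op_dom B)"
    and lin_op_add: "x \<in> op_dom B \<Longrightarrow> y \<in> op_dom B \<Longrightarrow> op_app B (x + y) = op_app B x + op_app B y"
    and lin_op_scaleC: "x \<in> op_dom B \<Longrightarrow> op_app B (c *\<^sub>C x) = c *\<^sub>C op_app B x"
  using assms unfolding lin_op_def by auto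

lemma lin_op_diff:
  assumes "lin_op B" and "x \<in> op_dom B" and "y \<in> op_dom B"
  shows "op_app B (x - y) = op_app B x - op_app B y"
proof -
  have "(-1) *\<^sub>C y \<in> op_dom B"
    using assms by (simp add: lin_op_dom_csubspace csubspace_scaleC)
  then show ?thesis
    using assms lin_op_add[of B x "(-1) *\<^sub>C y"] lin_op_scaleC[of B y "-1"]
    by (simp add: scaleC_minus1_left)
qed

lemma lin_op_zero: "lin_op B \<Longrightarrow> op_app B 0 = 0"
  using lin_op_diff[of B 0 0] by (simp add: lin_op_dom_csubspace csubspace_0)

lemma mem_graph: "p \<in> graph B \<longleftrightarrow> fst p \<in> op_dom B \<and> snd p = op_app B (fst p)"
  unfolding graph_def by (cases p) auto

lemma csubspace_graph:
  assumes "lin_op B"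
  shows "csubspace (graph B)"
  unfolding csubspace_def
proof (intro conjI ballI allI)
  have D: "csubspace (op_dom B)"
    using assms by (rule lin_op_dom_csubspace)
  show "0 \<in> graph B"
    using lin_op_zero[OF assms] csubspace_0[OF D] by (simp add: mem_graph)
  show "p + q \<in> graph B" if "p \<in> graph B" "q \<in> graph B" for p q
    using that lin_op_add[OF assms] csubspace_add[OF D] by (simp add: mem_graph)
  show "c *\<^sub>C p \<in> graph B" if "p \<in> graph B" for c p
    using that lin_op_scaleC[OF assms] csubspace_scaleC[OF D] by (simp add: mem_graph scaleC_prod_def)
qed

lemma csubspace_ran:
  assumes "lin_op B"
  shows "csubspace (ran B)"
  unfolding csubspace_def ran_def
proof (intro conjI ballI allI)
  have D: "csubspace (op_dom B)"
    using assms by (rule lin_op_dom_csubspace)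
  show "0 \<in> op_app B ` op_dom B"
    using lin_op_zero[OF assms] csubspace_0[OF D] by (metis image_eqI)
  show "y + y' \<in> op_app B ` op_dom B"
    if y: "y \<in> op_app B ` op_dom B" "y' \<in> op_app B ` op_dom B" for y y'
  proof -
    obtain x x' where x: "x \<in> op_dom B" "x' \<in> op_dom B" and "y = op_app B x" "y' = op_app B x'"
      using y by blast
    then have "y + y' = op_app B (x + x')"
      using lin_op_add[OF assms] by simp
    with x show ?thesis
      using csubspace_add[OF D] by blast
  qed
  show "c *\<^sub>C y \<in> op_app B ` op_dom B" if y: "y \<in> op_app B ` op_dom B" for c y
  proof -
    obtain x where x: "x \<in> op_dom B" and "y = op_app B x"
      using y by blast
    then have "c *\<^sub>C y = op_app B (c *\<^sub>C x)"
      using lin_op_scaleC[OF assms] by simp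
    with x show ?thesis
      using csubspace_scaleC[OF D] by blast
  qed
qed

lemma csubspace_ker:
  assumes "lin_op B"
  shows "csubspace (ker B)"
  using assms unfolding csubspace_def ker_def
  by (simp add: lin_op_dom_csubspace csubspace_0 csubspace_add csubspace_scaleC
      lin_op_zero lin_op_add lin_op_scaleC)

lemma closed_ker:
  assumes "closed_op B"
  shows "closed (ker B)"
proof -
  have "ker B = (\<lambda>x. (x, 0)) -` graph B"
    unfolding ker_def graph_def by auto
  then show ?thesis
    using assms unfolding closed_op_def by (simp add: continuous_closed_vimage continuous_intros)
qed

lemma op_dom_Pair [simp]: "op_dom (D, f) = D"
  and op_app_Pair [simp]: "op_app (D, f) = f"
  by (simp_all add: op_dom_def op_app_def)

lemma op_comp_simps [simp]:
  "op_dom (op_comp A B) = {x \<in> op_dom B. op_app B x \<in> op_dom A}"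
  "op_app (op_comp A B) x = op_app A (op_app B x)"
  unfolding op_comp_def op_dom_def op_app_def by auto

lemma lin_op_comp:
  assumes "lin_op A" and "lin_op B"
  shows "lin_op (op_comp A B)"
proof -
  have DA: "csubspace (op_dom A)" and DB: "csubspace (op_dom B)"
    using assms by (simp_all add: lin_op_dom_csubspace)
  have "csubspace (op_dom (op_comp A B))"
    unfolding csubspace_def
    using DA DB lin_op_zero[OF assms(2)] lin_op_add[OF assms(2)] lin_op_scaleC[OF assms(2)]
    by (simp add: csubspace_0 csubspace_add csubspace_scaleC)
  then show ?thesis
    using assms unfolding lin_op_def by simp
qed

lemma adjoint_eqI:
  assumes "densely_defined B"
    and "\<And>x. x \<in> op_dom B \<Longrightarrow> cinner (op_app B x) y = cinner x z"
  shows "y \<in> op_dom (adjoint B) \<and> op_app (adjoint B) y = z"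
proof
  show "y \<in> op_dom (adjoint B)"
    using assms(2) unfolding adjoint_def by auto
  have "z' = z" if "\<forall>x\<in>op_dom B. cinner (op_app B x) y = cinner x z'" for z'
  proof -
    have "z' - z \<in> orth (op_dom B)"
      using that assms(2) unfolding orth_def by (simp add: cinner_diff_right)
    then have "z' - z = 0"
      using orth_dense assms(1) unfolding densely_defined_def by blast
    then show ?thesis
      by simp
  qed
  then show "op_app (adjoint B) y = z"
    unfolding adjoint_def using assms(2) by (auto intro: the_equality)
qed

lemma cinner_adjoint:
  assumes "densely_defined B" and "y \<in> op_dom (adjoint B)" and "x \<in> op_dom B"
  shows "cinner (op_app B x) y = cinner x (op_app (adjoint B) y)"
proof -
  obtain z where "\<And>x. x \<in> op_dom B \<Longrightarrow> cinner (op_app B x) y = cinner x z"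
    using assms(2) unfolding adjoint_def by auto
  with adjoint_eqI[OF assms(1)] assms(3) show ?thesis
    by metis
qed

lemma lin_op_adjoint:
  assumes "densely_defined B"
  shows "lin_op (adjoint B)"
proof -
  note adj = adjoint_eqI[OF assms] cinner_adjoint[OF assms]
  have "0 \<in> op_dom (adjoint B)"
    using adj(1)[of 0 0] by simp
  moreover have "y + y' \<in> op_dom (adjoint B) \<and>
      op_app (adjoint B) (y + y') = op_app (adjoint B) y + op_app (adjoint B) y'"
    if "y \<in> op_dom (adjoint B)" "y' \<in> op_dom (adjoint B)" for y y'
    using that by (intro adj(1)) (simp add: cinner_add_right adj(2))
  moreover have "c *\<^sub>C y \<in> op_dom (adjoint B) \<and>
      op_app (adjoint B) (c *\<^sub>C y) = c *\<^sub>C op_app (adjoint B) y"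
    if "y \<in> op_dom (adjoint B)" for c y
    using that by (intro adj(1)) (simp add: cinner_scaleC_right adj(2))
  ultimately show ?thesis
    unfolding lin_op_def csubspace_def by blast
qed

lemma orth_ran_eq_ker_adjoint:
  assumes "densely_defined B"
  shows "orth (ran B) = ker (adjoint B)"
proof
  show "orth (ran B) \<subseteq> ker (adjoint B)"
    using adjoint_eqI[OF assms, where z = 0] unfolding orth_def ran_def ker_def by auto
  show "ker (adjoint B) \<subseteq> orth (ran B)"
    using cinner_adjoint[OF assms] unfolding orth_def ran_def ker_def by auto
qed

text \<open>Closedness of B enters here: for x orthogonal to the range of the adjoint, project (x, 0)
  onto the graph of B to get (u, B u); orthogonality of the remainder says that the adjoint maps
  B u to x - u, which forces x = u and B u = 0.\<close>
lemma orth_ran_adjoint_eq_ker: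
  fixes B :: "'a::chilbert_space linop"
  assumes "lin_op B" and "densely_defined B" and "closed_op B"
  shows "orth (ran (adjoint B)) = ker B"
proof
  show "ker B \<subseteq> orth (ran (adjoint B))"
    using cinner_adjoint[OF assms(2)] cinner_commute_eq_zero
    unfolding orth_def ran_def ker_def by fastforce
  show "orth (ran (adjoint B)) \<subseteq> ker B"
  proof
    fix x
    assume x: "x \<in> orth (ran (adjoint B))"
    obtain g where "g \<in> graph B" and g_orth: "(x, 0) - g \<in> orth (graph B)"
      using orth_projection_exists[OF _ csubspace_graph[OF assms(1)]] assms(3)
      unfolding closed_op_def by blast
    then obtain u where u: "u \<in> op_dom B" and g: "g = (u, op_app B u)"
      by (auto simp: mem_graph prod_eq_iff)
    have "cinner (op_app B w) (op_app B u) = cinner w (x - u)" if "w \<in> op_dom B" for w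
    proof -
      have "(w, op_app B w) \<in> graph B"
        using that by (simp add: mem_graph)
      then have "cinner (w, op_app B w) (x - u, - op_app B u) = 0"
        using g_orth unfolding g orth_def by simp
      then show ?thesis
        by (simp add: cinner_prod_def cinner_minus_right eq_neg_iff_add_eq_0 add.commute)
    qed
    then have Bu: "op_app B u \<in> op_dom (adjoint B)" "op_app (adjoint B) (op_app B u) = x - u"
      using adjoint_eqI[OF assms(2)] by blast+
    have "cinner (x - u) x = 0"
      using x Bu unfolding orth_def ran_def by force
    moreover have "cinner u (x - u) = complex_of_real ((norm (op_app B u))\<^sup>2)"
      using cinner_adjoint[OF assms(2) Bu(1) u] Bu(2) by (simp add: cinner_self_eq_norm_sq)
    then have "cinner (x - u) u = complex_of_real ((norm (op_app B u))\<^sup>2)"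
      using cinner_commute[of "x - u" u] by simp
    ultimately have "(norm (x - u))\<^sup>2 = - (norm (op_app B u))\<^sup>2"
      using power2_norm_eq_cinner[of "x - u"] by (simp add: cinner_diff_right)
    then have "(norm (x - u))\<^sup>2 = 0" and "(norm (op_app B u))\<^sup>2 = 0"
      using zero_le_power2[of "norm (x - u)"] zero_le_power2[of "norm (op_app B u)"] by linarith+
    then have "x - u = 0" and "op_app B u = 0"
      by simp_all
    with u show "x \<in> ker B"
      unfolding ker_def by simp
  qed
qed

lemma ker_adjoint_comp:
  assumes "densely_defined B"
  shows "ker (op_comp (adjoint B) B) = ker B"
proof
  show "ker (op_comp (adjoint B) B) \<subseteq> ker B"
    using cinner_adjoint[OF assms] cinner_eq_zero_iff unfolding ker_def by fastforce
  show "ker B \<subseteq> ker (op_comp (adjoint B) B)"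
    using adjoint_eqI[OF assms, of 0 0] unfolding ker_def by auto
qed

lemma ran_adjoint_comp:
  fixes B :: "'a::chilbert_space linop"
  assumes "lin_op B" and "densely_defined B" and "closed (ran B)"
  shows "ran (op_comp (adjoint B) B) = ran (adjoint B)"
proof
  show "ran (op_comp (adjoint B) B) \<subseteq> ran (adjoint B)"
    unfolding ran_def by auto
  show "ran (adjoint B) \<subseteq> ran (op_comp (adjoint B) B)"
  proof
    fix m
    assume "m \<in> ran (adjoint B)"
    then obtain y where y: "y \<in> op_dom (adjoint B)" "m = op_app (adjoint B) y"
      unfolding ran_def by auto
    obtain x where x: "x \<in> op_dom B" and "y - op_app B x \<in> orth (ran B)"
      using orth_projection_exists[OF assms(3) csubspace_ran[OF assms(1)]]
      unfolding ran_def by blast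
    then have yx: "y - op_app B x \<in> op_dom (adjoint B)" "op_app (adjoint B) (y - op_app B x) = 0"
      using orth_ran_eq_ker_adjoint[OF assms(2)] unfolding ker_def by auto
    have D: "csubspace (op_dom (adjoint B))"
      using lin_op_adjoint[OF assms(2)] by (rule lin_op_dom_csubspace)
    have "op_app B x \<in> op_dom (adjoint B)"
      using csubspace_diff[OF D y(1) yx(1)] by simp
    moreover have "op_app (adjoint B) (op_app B x) = m"
      using lin_op_diff[OF lin_op_adjoint[OF assms(2)] y(1) yx(1)] yx(2) y(2) by simp
    ultimately show "m \<in> ran (op_comp (adjoint B) B)"
      using x unfolding ran_def by force
  qed
qed

lemma selfadjoint_cinner:
  assumes "selfadjoint W" and "a \<in> op_dom W" and "b \<in> op_dom W"
  shows "cinner (op_app W a) b = cinner a (op_app W b)"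
  using assms cinner_adjoint[of W b a] unfolding selfadjoint_def by auto

lemma selfadjoint_eqI:
  assumes "selfadjoint W" and "\<And>a. a \<in> op_dom W \<Longrightarrow> cinner (op_app W a) y = cinner a z"
  shows "y \<in> op_dom W \<and> op_app W y = z"
  using assms adjoint_eqI[of W y z] unfolding selfadjoint_def by auto

lemma selfadjoint_if_symmetric_everywhere_defined:
  assumes "op_dom W = UNIV" and "\<And>a b. cinner (op_app W a) b = cinner a (op_app W b)"
  shows "selfadjoint W"
proof -
  have "densely_defined W"
    using assms(1) unfolding densely_defined_def by simp
  with assms show ?thesis
    unfolding selfadjoint_def using adjoint_eqI[of W] by blast
qed

lemma mp_inv_eqI:
  fixes B :: "'a::complex_inner linop"
  assumes "lin_op B" and "c \<in> carrier_op B" and "z \<in> orth (ran B)"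
  shows "op_app (mp_inv B) (op_app B c + z) = c"
  unfolding mp_inv_def op_app_Pair
proof (rule the_equality)
  let ?v = "op_app B c + z"
  show "c \<in> carrier_op B \<and> (\<exists>z'\<in>orth (ran B). ?v = op_app B c + z')"
    using assms(2,3) by blast
  fix c'
  assume "c' \<in> carrier_op B \<and> (\<exists>z'\<in>orth (ran B). ?v = op_app B c' + z')"
  then obtain z' where c': "c' \<in> op_dom B" "c' \<in> orth (ker B)" and "z' \<in> orth (ran B)"
    and v: "?v = op_app B c' + z'"
    unfolding carrier_op_def by blast
  have c: "c \<in> op_dom B" "c \<in> orth (ker B)"
    using assms(2) unfolding carrier_op_def by simp_all
  have D: "c' - c \<in> op_dom B"
    using csubspace_diff[OF lin_op_dom_csubspace[OF assms(1)] c'(1) c(1)] .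
  have "op_app B (c' - c) = op_app B c' - op_app B c"
    using lin_op_diff[OF assms(1) c'(1) c(1)] .
  also have "\<dots> = z - z'"
    using v by (simp add: algebra_simps)
  finally have "op_app B (c' - c) = z - z'" .
  moreover have "op_app B (c' - c) \<in> ran B"
    using D unfolding ran_def by blast
  moreover have "z - z' \<in> orth (ran B)"
    using orth_diff[OF assms(3) \<open>z' \<in> orth (ran B)\<close>] .
  ultimately have "c' - c \<in> ker B"
    using D orth_eq_zero_if_mem[of "z - z'" "ran B"] unfolding ker_def by simp
  moreover have "c' - c \<in> orth (ker B)"
    using orth_diff c'(2) c(2) by blast
  ultimately show "c' = c"
    using orth_eq_zero_if_mem[of "c' - c" "ker B"] by simp
qed

lemma mp_inv_eval:
  fixes B :: "'a::chilbert_space linop"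
  assumes "lin_op B" and "closed (ker B)" and "x \<in> op_dom B" and "z \<in> orth (ran B)"
  shows "op_app B x + z \<in> op_dom (mp_inv B)"
    and "op_app (mp_inv B) (op_app B x + z) \<in> carrier_op B"
    and "op_app (mp_inv B) (op_app B x + z) - x \<in> ker B"
proof -
  have D: "csubspace (op_dom B)" and N: "csubspace (ker B)"
    using assms(1) by (simp_all add: lin_op_dom_csubspace csubspace_ker)
  show "op_app B x + z \<in> op_dom (mp_inv B)"
    using assms(3,4) unfolding mp_inv_def ran_def by auto
  obtain n where n: "n \<in> ker B" "x - n \<in> orth (ker B)"
    using orth_projection_exists[OF assms(2) N] by blast
  then have "n \<in> op_dom B" "op_app B n = 0"
    unfolding ker_def by simp_all
  then have c: "x - n \<in> carrier_op B" and "op_app B (x - n) = op_app B x"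
    using n(2) csubspace_diff[OF D assms(3)] lin_op_diff[OF assms(1) assms(3)]
    unfolding carrier_op_def by simp_all
  then have "op_app (mp_inv B) (op_app B x + z) = x - n"
    using mp_inv_eqI[OF assms(1) c assms(4)] by simp
  then show "op_app (mp_inv B) (op_app B x + z) \<in> carrier_op B"
    and "op_app (mp_inv B) (op_app B x + z) - x \<in> ker B"
    using c csubspace_diff[OF N csubspace_0[OF N] n(1)] by simp_all
qed

locale closed_range_operator =
  fixes T :: "'a::chilbert_space linop"
  assumes lin: "lin_op T" and dense: "densely_defined T" and closed_graph: "closed_op T"
    and closed_ran: "closed (ran T)"
begin

abbreviation S :: "'a linop" where "S \<equiv> op_comp (adjoint T) T"

abbreviation W :: "'a linop" where "W \<equiv> cauchy_dual T"

lemma ran_decomp: "\<exists>x\<in>op_dom T. y - op_app T x \<in> orth (ran T)"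
  using orth_projection_exists[OF closed_ran csubspace_ran[OF lin]] unfolding ran_def by blast

lemma ker_decomp: "\<exists>n\<in>ker T. x - n \<in> orth (ker T)"
  using orth_projection_exists[OF closed_ker[OF closed_graph] csubspace_ker[OF lin]] .

lemma orth_ran_S: "orth (ran S) = ker T"
  using ran_adjoint_comp[OF lin dense closed_ran] orth_ran_adjoint_eq_ker[OF lin dense closed_graph]
  by simp

lemma W_eval:
  assumes "x \<in> op_dom S" and "n \<in> ker T"
  shows "op_app S x + n \<in> op_dom W" and "op_app W (op_app S x + n) = op_app T x"
proof -
  have lin_S: "lin_op S"
    using lin_op_comp[OF lin_op_adjoint[OF dense] lin] .
  have ker_S: "ker S = ker T"
    using ker_adjoint_comp[OF dense] .
  have "closed (ker S)"
    using ker_S closed_ker[OF closed_graph] by simp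
  moreover have "n \<in> orth (ran S)"
    using assms(2) orth_ran_S by simp
  ultimately have mp: "op_app S x + n \<in> op_dom (mp_inv S)"
    "op_app (mp_inv S) (op_app S x + n) \<in> carrier_op S"
    "op_app (mp_inv S) (op_app S x + n) - x \<in> ker S"
    using mp_inv_eval[OF lin_S _ assms(1)] by blast+
  let ?c = "op_app (mp_inv S) (op_app S x + n)"
  have "?c \<in> op_dom T" and "x \<in> op_dom T"
    using mp(2) assms(1) unfolding carrier_op_def by simp_all
  moreover have "op_app T (?c - x) = 0"
    using mp(3) unfolding ker_S unfolding ker_def by simp
  ultimately have "op_app T ?c = op_app T x"
    using lin_op_diff[OF lin] by simp
  then show "op_app S x + n \<in> op_dom W" and "op_app W (op_app S x + n) = op_app T x"
    using mp(1) \<open>?c \<in> op_dom T\<close> unfolding cauchy_dual_def by simp_all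
qed

lemma W_cases:
  assumes "v \<in> op_dom W"
  obtains x n where "x \<in> op_dom S" and "n \<in> ker T" and "v = op_app S x + n"
    and "op_app W v = op_app T x"
proof -
  have "v \<in> op_dom (mp_inv S)"
    using assms unfolding cauchy_dual_def by simp
  then obtain x n where "x \<in> op_dom S" "n \<in> orth (ran S)" "v = op_app S x + n"
    unfolding mp_inv_def ran_def by auto
  with orth_ran_S W_eval(2) that show ?thesis
    by simp
qed

lemma selfadjoint_W_if_selfadjoint:
  assumes "selfadjoint T"
  shows "selfadjoint W"
proof -
  have dom_adj: "op_dom (adjoint T) = op_dom T"
    and app_adj: "\<And>x. x \<in> op_dom T \<Longrightarrow> op_app (adjoint T) x = op_app T x"
    using assms unfolding selfadjoint_def by auto
  have ran_S: "ran S = ran T"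
    using ran_adjoint_comp[OF lin dense closed_ran] app_adj unfolding ran_def dom_adj by simp
  have orth_ran: "orth (ran T) = ker T"
    using orth_ran_eq_ker_adjoint[OF dense] app_adj unfolding ker_def dom_adj by auto
  have dom_W: "op_dom W = UNIV"
  proof -
    have "v \<in> op_dom W" for v
    proof -
      obtain x where "x \<in> op_dom T" and z: "v - op_app T x \<in> orth (ran T)"
        using ran_decomp by blast
      then obtain x' where "x' \<in> op_dom S" and "op_app T x = op_app S x'"
        using ran_S unfolding ran_def by (metis image_eqI image_iff)
      then show ?thesis
        using W_eval(1)[of x' "v - op_app T x"] z orth_ran by simp
    qed
    then show ?thesis
      by blast
  qed
  have "cinner (op_app W a) b = cinner a (op_app W b)" for a b
  proof -
    obtain x n where x: "x \<in> op_dom S" "n \<in> ker T" "a = op_app S x + n" "op_app W a = op_app T x"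
      using W_cases dom_W by blast
    obtain x' n' where x': "x' \<in> op_dom S" "n' \<in> ker T" "b = op_app S x' + n'"
      "op_app W b = op_app T x'"
      using W_cases dom_W by blast
    have "cinner (op_app T (op_app T x')) (op_app T x) = cinner (op_app T x') (op_app S x)"
      using cinner_adjoint[OF dense, of "op_app T x" "op_app T x'"] x(1) x'(1) dom_adj by simp
    then have "cinner (op_app T x) (op_app S x') = cinner (op_app S x) (op_app T x')"
      using cinner_commute[of "op_app T x" "op_app S x'"] cinner_commute[of "op_app S x" "op_app T x'"]
        x'(1) app_adj dom_adj by simp
    moreover have "cinner (op_app T x) n' = 0" and "cinner n (op_app T x') = 0"
      using x(1,2) x'(1,2) cinner_commute_eq_zero unfolding orth_ran[symmetric] orth_def ran_def
      by auto
    ultimately show ?thesis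
      using x(3,4) x'(3,4) by (simp add: cinner_add_left cinner_add_right)
  qed
  with dom_W show ?thesis
    by (rule selfadjoint_if_symmetric_everywhere_defined)
qed

context
  assumes W_selfadjoint: "selfadjoint W"
begin

lemma W_eval_ran:
  assumes "x \<in> op_dom T" and "n \<in> ker T" and "x - n \<in> orth (ker T)" and "z \<in> orth (ran T)"
  shows "op_app T x + z \<in> op_dom W \<and> op_app W (op_app T x + z) = x - n"
proof (rule selfadjoint_eqI[OF W_selfadjoint])
  fix a
  assume "a \<in> op_dom W"
  then obtain x' n' where x': "x' \<in> op_dom S" "n' \<in> ker T" "a = op_app S x' + n'"
    "op_app W a = op_app T x'"
    by (rule W_cases)
  have "cinner (op_app T x') (op_app T x) = cinner (op_app S x') x"
    using cinner_adjoint[OF dense, of "op_app T x'" x] x'(1) assms(1)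
      cinner_commute[of "op_app T x'" "op_app T x"] cinner_commute[of "op_app S x'" x] by simp
  moreover have "cinner (op_app T x') z = 0"
    using assms(4) x'(1) unfolding orth_def ran_def by auto
  moreover have "cinner (op_app S x') n = 0"
    using assms(2) x'(1) unfolding orth_ran_S[symmetric] orth_def ran_def by auto
  moreover have "cinner n' (x - n) = 0"
    using assms(3) x'(2) unfolding orth_def by auto
  ultimately show "cinner (op_app W a) (op_app T x + z) = cinner a (x - n)"
    using x'(3,4) by (simp add: cinner_add_left cinner_add_right cinner_diff_right)
qed

lemma W_everywhere_defined: "op_dom W = UNIV"
proof -
  have "y \<in> op_dom W" for y
  proof -
    obtain x where "x \<in> op_dom T" and "y - op_app T x \<in> orth (ran T)"
      using ran_decomp by blast
    moreover obtain n where "n \<in> ker T" and "x - n \<in> orth (ker T)"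
      using ker_decomp by blast
    ultimately show ?thesis
      using W_eval_ran[of x n "y - op_app T x"] by simp
  qed
  then show ?thesis
    by blast
qed

lemma ker_eq_orth_ran: "ker T = orth (ran T)"
proof
  have T0: "0 \<in> op_dom T" "op_app T 0 = 0"
    using lin by (simp_all add: lin_op_dom_csubspace csubspace_0 lin_op_zero)
  show "orth (ran T) \<subseteq> ker T"
  proof
    fix v
    assume v: "v \<in> orth (ran T)"
    obtain x n where x: "x \<in> op_dom S" "n \<in> ker T" "v = op_app S x + n" "op_app W v = op_app T x"
      using W_cases W_everywhere_defined by blast
    have "0 \<in> ker T"
      using T0 unfolding ker_def by simp
    then have "op_app W v = 0"
      using W_eval_ran[OF T0(1) _ _ v] T0 by simp
    then have "op_app S x = 0"
      using x(4) lin_op_zero[OF lin_op_adjoint[OF dense]] by simp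
    with x(2,3) show "v \<in> ker T"
      by simp
  qed
  show "ker T \<subseteq> orth (ran T)"
  proof
    fix n
    assume n: "n \<in> ker T"
    have "0 \<in> op_dom S" "op_app S 0 = 0"
      using T0 lin_op_zero[OF lin_op_adjoint[OF dense]] lin_op_dom_csubspace[OF lin_op_adjoint[OF dense]]
      by (simp_all add: csubspace_0)
    then have Wn: "op_app W n = 0"
      using W_eval(2)[of 0 n] n T0 by simp
    obtain x where x: "x \<in> op_dom T" and z: "n - op_app T x \<in> orth (ran T)"
      using ran_decomp by blast
    obtain m where m: "m \<in> ker T" "x - m \<in> orth (ker T)"
      using ker_decomp by blast
    have "x - m = 0"
      using W_eval_ran[OF x m z] Wn by simp
    then have "op_app T x = 0"
      using m(1) unfolding ker_def by simp
    with z show "n \<in> orth (ran T)"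
      by simp
  qed
qed

lemma T_symmetric:
  assumes "x \<in> op_dom T" and "y \<in> op_dom T"
  shows "cinner (op_app T x) y = cinner x (op_app T y)"
proof -
  obtain n where n: "n \<in> ker T" "x - n \<in> orth (ker T)"
    using ker_decomp by blast
  obtain m where m: "m \<in> ker T" "y - m \<in> orth (ker T)"
    using ker_decomp by blast
  have "cinner (op_app T x) y = cinner (op_app T x) (y - m)"
    using m(1) assms(1) unfolding ker_eq_orth_ran orth_def ran_def by (simp add: cinner_diff_right)
  also have "\<dots> = cinner (op_app T x) (op_app W (op_app T y))"
    using W_eval_ran[OF assms(2) m orth_zero] by simp
  also have "\<dots> = cinner (op_app W (op_app T x)) (op_app T y)"
    using selfadjoint_cinner[OF W_selfadjoint] W_everywhere_defined by simp
  also have "\<dots> = cinner (x - n) (op_app T y)"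
    using W_eval_ran[OF assms(1) n orth_zero] by simp
  also have "\<dots> = cinner x (op_app T y)"
  proof -
    have "cinner (op_app T y) n = 0"
      using n(1) assms(2) unfolding ker_eq_orth_ran orth_def ran_def by blast
    then have "cinner n (op_app T y) = 0"
      using cinner_commute_eq_zero by blast
    then show ?thesis
      by (simp add: cinner_diff_left)
  qed
  finally show ?thesis .
qed

lemma selfadjoint_if_selfadjoint_W: "selfadjoint T"
proof -
  have T_adj: "x \<in> op_dom (adjoint T) \<and> op_app (adjoint T) x = op_app T x" if "x \<in> op_dom T" for x
    using adjoint_eqI[OF dense] T_symmetric that by blast
  have "y \<in> op_dom T" if y: "y \<in> op_dom (adjoint T)" for y
  proof -
    have "op_app (adjoint T) y \<in> orth (ker T)"
      unfolding orth_def ker_def by (auto simp: cinner_adjoint[OF dense y, symmetric])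
    then have "op_app (adjoint T) y \<in> ran T"
      using orth_orth[OF closed_ran csubspace_ran[OF lin]] ker_eq_orth_ran by simp
    then obtain x where x: "x \<in> op_dom T" "op_app (adjoint T) y = op_app T x"
      unfolding ran_def by blast
    have "y - x \<in> op_dom (adjoint T)" and "op_app (adjoint T) (y - x) = 0"
      using T_adj[OF x(1)] y x(2) lin_op_diff[OF lin_op_adjoint[OF dense]]
        csubspace_diff[OF lin_op_dom_csubspace[OF lin_op_adjoint[OF dense]]] by simp_all
    then have "y - x \<in> ker (adjoint T)"
      unfolding ker_def by simp
    then have "y - x \<in> ker T"
      using orth_ran_eq_ker_adjoint[OF dense] ker_eq_orth_ran by simp
    then have "x + (y - x) \<in> op_dom T"
      using x(1) lin_op_dom_csubspace[OF lin] csubspace_add unfolding ker_def by blast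
    then show ?thesis
      by simp
  qed
  with T_adj dense show ?thesis
    unfolding selfadjoint_def by blast
qed

end

end

theorem theorem2p3:
  fixes T :: "'a::chilbert_space linop"
  assumes "lin_op T" and "densely_defined T" and "closed_op T" and "closed (ran T)"
  shows "selfadjoint T \<longleftrightarrow> selfadjoint (cauchy_dual T)"
proof -
  interpret closed_range_operator T
    using assms by unfold_locales
  show ?thesis
    using selfadjoint_W_if_selfadjoint selfadjoint_if_selfadjoint_W by blast
qed

end
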